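(* Let $n\ge 2$ and let $\mathrm{Dic}_n=\langle a,b : a^n=b^2,\ a^{2n}=e,\ b^{-1}ab=a^{-1}\rangle$ be the dicyclic group of order $4n$. Let $H$ be a normal subgroup of $\mathrm{Dic}_n$. Then $\Gamma_{\mathrm{Dic}_n,H}$ admits a perfect code if and only if either $H=\mathrm{Dic}_n$, or $H=\langle a^t\rangle$ for a positive divisor $t$ of $2n$ such that $2n/t$ is odd or $2n/t=2$.
   Context: For a normal subgroup $H$ of a finite group $G$ with identity $e$, the subgroup sum graph $\Gamma_{G,H}$ is the simple undirected graph with vertex set $G$ in which distinct vertices $x,y$ are adjacent if and only if $xy\in H\setminus\{e\}$. A perfect code in a graph is a set $C$ of vertices that is independent and such that every vertex not in $C$ is adjacent to exactly one vertex of $C$. *)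

theory Defs
  imports "HOL-Algebra.Algebra"
begin

text \<open>Dicyclic group of order 4n, concretely: the pair (i,j) with 0 \<le> i < 2n, j \<in> {0,1}
  stands for a^i b^j.  Using b a = a^{-1} b and b^2 = a^n:
  (a^i b^j)(a^k b^l) = a^(i + (-1)^j k + n [j=l=1]) b^((j+l) mod 2).\<close>

definition Dic :: "nat \<Rightarrow> (int \<times> int) monoid" where
  "Dic n = \<lparr> carrier = {0..<2 * int n} \<times> {0..<2},
             monoid.mult = (\<lambda>x y. let i = fst x; j = snd x; k = fst y; l = snd y in
                ((i + (if j = 0 then k else - k) + (if j = 1 \<and> l = 1 then int n else 0))
                   mod (2 * int n),
                 (j + l) mod 2)),
             monoid.one = (0, 0) \<rparr>"

definition dic_a :: "nat \<Rightarrow> int \<times> int" where "dic_a n = (1, 0)"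
definition dic_b :: "nat \<Rightarrow> int \<times> int" where "dic_b n = (0, 1)"

definition sum_adj :: "('a, 'b) monoid_scheme \<Rightarrow> 'a set \<Rightarrow> 'a \<Rightarrow> 'a \<Rightarrow> bool" where
  "sum_adj G H x y \<longleftrightarrow> x \<in> carrier G \<and> y \<in> carrier G \<and> x \<noteq> y \<and>
     x \<otimes>\<^bsub>G\<^esub> y \<in> H - {\<one>\<^bsub>G\<^esub>}"

definition perfect_code :: "('a, 'b) monoid_scheme \<Rightarrow> 'a set \<Rightarrow> 'a set \<Rightarrow> bool" where
  "perfect_code G H C \<longleftrightarrow> C \<subseteq> carrier G \<and>
     (\<forall>x\<in>C. \<forall>y\<in>C. \<not> sum_adj G H x y) \<and>
     (\<forall>x\<in>carrier G - C. \<exists>!c. c \<in> C \<and> sum_adj G H x c)"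

end

theory Submission
  imports Defs
begin

(* For normal H the neighbours of x in the subgroup sum graph are the elements of H x^-1 other than
   x and x^-1, so the graph splits along the classes H x \<union> H x^-1.  Choose in every class a
   representative r, of order at most 2 whenever the class contains such an element, and take all
   r and r^-1: this is a perfect code unless some x is adjacent to both r and r^-1 with r \<noteq> r^-1,
   which needs r^2 \<in> H and two different nonidentity elements of H.  Conversely, a perfect code that
   meets a coset Hg with g^2 \<in> H in an element c with c^2 \<noteq> e forces Hg = {c, c^-1}, impossible
   once |H| > 2.  Hence a perfect code exists iff |H| \<le> 2 or every coset Hg with g^2 \<in> H contains
   a square root of e.

   In Dic_n the square roots of e are e and a^n.  A normal subgroup containing a reflection contains
   a^2 and a^n, and the coset Ha contains e or a^n only if a \<in> H, i.e. H = Dic_n.  For H = <a^t>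
   with m = 2n/t: if m is odd, g^2 \<in> H forces g = a^i with t | i or t | n - i, so Hg contains e or
   a^n; if m is even, Hb consists of reflections, none of which squares to e, and |H| = m \<le> 2 only
   for m = 2. *)

section \<open>Perfect codes in subgroup sum graphs\<close>

(* "Involution" includes \<one> here: the condition only asks for some z with z \<otimes> z = \<one>. *)
definition square_cosets_have_involutions :: "('a, 'b) monoid_scheme \<Rightarrow> 'a set \<Rightarrow> bool" where
  "square_cosets_have_involutions G H \<longleftrightarrow>
     (\<forall>g\<in>carrier G. g \<otimes>\<^bsub>G\<^esub> g \<in> H \<longrightarrow> (\<exists>z\<in>H #>\<^bsub>G\<^esub> g. z \<otimes>\<^bsub>G\<^esub> z = \<one>\<^bsub>G\<^esub>))"

context group begin

lemma normal_mult_commute_mem: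
  assumes "H \<lhd> G" "x \<in> carrier G" "y \<in> carrier G" "x \<otimes> y \<in> H"
  shows "y \<otimes> x \<in> H"
proof -
  have "inv x \<otimes> (x \<otimes> y) \<otimes> x \<in> H"
    using assms by (simp add: normal.inv_op_closed1)
  then show ?thesis
    using assms(2,3) by (simp add: m_assoc[symmetric])
qed

lemma sum_adj_iff:
  assumes "H \<lhd> G"
  shows "sum_adj G H x y \<longleftrightarrow> x \<in> carrier G \<and> y \<in> H #> inv x \<and> y \<noteq> x \<and> y \<noteq> inv x"
proof -
  interpret subgroup H G using assms by (rule normal_imp_subgroup)
  have "x \<otimes> y \<in> H \<longleftrightarrow> y \<in> H #> inv x" if "x \<in> carrier G" "y \<in> carrier G"
    using that normal_mult_commute_mem[OF assms] by (auto simp: rcos_module is_group)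
  moreover have "x \<otimes> y = \<one> \<longleftrightarrow> y = inv x" if "x \<in> carrier G" "y \<in> carrier G"
    using that by (metis inv_equality inv_closed r_inv)
  moreover have "y \<in> carrier G" if "x \<in> carrier G" "y \<in> H #> inv x"
    using that by (meson elemrcos_carrier inv_closed is_group)
  ultimately show ?thesis
    unfolding sum_adj_def by blast
qed

lemma rcos_inv_eq_iff:
  assumes "subgroup H G" "x \<in> carrier G"
  shows "H #> inv x = H #> x \<longleftrightarrow> x \<otimes> x \<in> H"
proof -
  have "H #> inv x = H #> x \<longleftrightarrow> inv x \<in> H #> x"
    using assms by (metis inv_closed repr_independence repr_independenceD)
  also have "\<dots> \<longleftrightarrow> inv (x \<otimes> x) \<in> H"
    using assms by (simp add: subgroup.rcos_module is_group inv_mult_group)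
  also have "\<dots> \<longleftrightarrow> x \<otimes> x \<in> H"
    using assms by (metis inv_inv m_closed subgroup.m_inv_closed)
  finally show ?thesis .
qed

lemma inv_mem_rcos:
  assumes "H \<lhd> G" "x \<in> carrier G" "y \<in> H #> x"
  shows "inv y \<in> H #> inv x"
  using assms normal.rcos_inv[OF assms(1,2)] by (auto simp: SET_INV_def)

definition sym_coset :: "'a set \<Rightarrow> 'a \<Rightarrow> 'a set" where
  "sym_coset H x = (H #> x) \<union> (H #> inv x)"

lemma sym_coset_eq:
  assumes "H \<lhd> G" "x \<in> carrier G" "y \<in> sym_coset H x"
  shows "sym_coset H y = sym_coset H x"
proof -
  have sg: "subgroup H G" using assms(1) by (rule normal_imp_subgroup)
  from assms(3) consider "y \<in> H #> x" | "y \<in> H #> inv x" unfolding sym_coset_def by blast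
  then show ?thesis
  proof cases
    case 1
    have "H #> y = H #> x" using repr_independence[OF 1 assms(2) sg] by simp
    moreover have "H #> inv y = H #> inv x"
      using repr_independence[OF inv_mem_rcos[OF assms(1,2) 1] inv_closed[OF assms(2)] sg] by simp
    ultimately show ?thesis by (simp add: sym_coset_def)
  next
    case 2
    have "inv y \<in> H #> x" using inv_mem_rcos[OF assms(1) inv_closed[OF assms(2)] 2] assms(2) by simp
    then have "H #> inv y = H #> x" using repr_independence[OF _ assms(2) sg] by simp
    moreover have "H #> y = H #> inv x" using repr_independence[OF 2 inv_closed[OF assms(2)] sg] by simp
    ultimately show ?thesis by (auto simp: sym_coset_def)
  qed
qed

lemma sym_coset_self: "subgroup H G \<Longrightarrow> x \<in> carrier G \<Longrightarrow> x \<in> sym_coset H x"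
  by (simp add: sym_coset_def rcos_self)

lemma sym_coset_subset_carrier: "subgroup H G \<Longrightarrow> x \<in> carrier G \<Longrightarrow> sym_coset H x \<subseteq> carrier G"
  by (simp add: sym_coset_def r_coset_subset_G subgroup.subset)

lemma adjacent_in_sym_coset: "H \<lhd> G \<Longrightarrow> sum_adj G H x y \<Longrightarrow> y \<in> sym_coset H x"
  by (simp add: sum_adj_iff sym_coset_def)

definition class_rep :: "'a set \<Rightarrow> 'a" where
  "class_rep K = (SOME r. r \<in> K \<and> ((\<exists>z\<in>K. z \<otimes> z = \<one>) \<longrightarrow> r \<otimes> r = \<one>))"

lemma class_rep:
  assumes "K \<noteq> {}"
  shows "class_rep K \<in> K" "(\<exists>z\<in>K. z \<otimes> z = \<one>) \<Longrightarrow> class_rep K \<otimes> class_rep K = \<one>"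
proof -
  have "\<exists>r. r \<in> K \<and> ((\<exists>z\<in>K. z \<otimes> z = \<one>) \<longrightarrow> r \<otimes> r = \<one>)"
    using assms by blast
  then have "class_rep K \<in> K \<and> ((\<exists>z\<in>K. z \<otimes> z = \<one>) \<longrightarrow> class_rep K \<otimes> class_rep K = \<one>)"
    unfolding class_rep_def by (rule someI_ex)
  then show "class_rep K \<in> K" "(\<exists>z\<in>K. z \<otimes> z = \<one>) \<Longrightarrow> class_rep K \<otimes> class_rep K = \<one>"
    by blast+
qed

lemma class_rep_sym_coset:
  assumes "subgroup H G" "x \<in> carrier G"
  shows "class_rep (sym_coset H x) \<in> sym_coset H x" "class_rep (sym_coset H x) \<in> carrier G"
  using class_rep(1) sym_coset_self[OF assms] sym_coset_subset_carrier[OF assms] by blast+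

definition rep_code :: "'a set \<Rightarrow> 'a set" where
  "rep_code H = {y \<in> carrier G. class_rep (sym_coset H y) \<in> {y, inv y}}"

lemma rep_code_inter_sym_coset:
  assumes "H \<lhd> G" "x \<in> carrier G" "y \<in> sym_coset H x"
  shows "y \<in> rep_code H \<longleftrightarrow> y = class_rep (sym_coset H x) \<or> y = inv (class_rep (sym_coset H x))"
proof -
  have sg: "subgroup H G" using assms(1) by (rule normal_imp_subgroup)
  define r where "r = class_rep (sym_coset H x)"
  have y: "y \<in> carrier G" using assms(3) sym_coset_subset_carrier[OF sg assms(2)] by blast
  have "r = inv y \<longleftrightarrow> y = inv r"
    using y class_rep_sym_coset(2)[OF sg assms(2)] by (metis inv_inv r_def)
  moreover have "class_rep (sym_coset H y) = r"
    using sym_coset_eq[OF assms] r_def by simp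
  ultimately show ?thesis
    using y by (auto simp: rep_code_def simp flip: r_def)
qed

lemma rep_code_independent:
  assumes N: "H \<lhd> G" and "x \<in> rep_code H" "y \<in> rep_code H"
  shows "\<not> sum_adj G H x y"
proof
  assume adj: "sum_adj G H x y"
  have sg: "subgroup H G" using N by (rule normal_imp_subgroup)
  from adj have x: "x \<in> carrier G" and "y \<noteq> x" "y \<noteq> inv x"
    by (auto simp: sum_adj_iff[OF N])
  moreover have "x = class_rep (sym_coset H x) \<or> x = inv (class_rep (sym_coset H x))"
    using rep_code_inter_sym_coset[OF N x sym_coset_self[OF sg x]] assms(2) by blast
  moreover have "y = class_rep (sym_coset H x) \<or> y = inv (class_rep (sym_coset H x))"
    using rep_code_inter_sym_coset[OF N x adjacent_in_sym_coset[OF N adj]] assms(3) by blast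
  ultimately show False
    using class_rep_sym_coset(2)[OF sg x] by (metis inv_inv)
qed

lemma class_rep_adjacent_pair:
  assumes N: "H \<lhd> G"
    and crit: "(\<exists>h. H \<subseteq> {\<one>, h}) \<or> square_cosets_have_involutions G H"
    and adj: "sum_adj G H x r" "sum_adj G H x (inv r)" and r_def: "r = class_rep (sym_coset H x)"
  shows "r = inv r"
proof -
  have sg: "subgroup H G" using N by (rule normal_imp_subgroup)
  have x: "x \<in> carrier G" and r: "r \<in> carrier G" and coset: "r \<in> H #> inv x" "inv r \<in> H #> inv x"
    using adj class_rep_sym_coset(2)[OF sg] r_def by (auto simp: sum_adj_iff[OF N])
  have same_coset: "H #> inv x = H #> c" if "c \<in> H #> inv x" for c
    using repr_independence[OF that inv_closed[OF x] sg] .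
  from crit show ?thesis
  proof
    assume "\<exists>h. H \<subseteq> {\<one>, h}"
    then obtain h where "H \<subseteq> {\<one>, h}" by blast
    moreover have "x \<otimes> r \<in> H - {\<one>}" "x \<otimes> inv r \<in> H - {\<one>}"
      using adj by (simp_all add: sum_adj_def)
    ultimately have "x \<otimes> r = x \<otimes> inv r" by auto
    then show ?thesis by (rule l_cancel[OF _ r inv_closed[OF r] x])
  next
    assume "square_cosets_have_involutions G H"
    moreover have "r \<otimes> r \<in> H"
      using rcos_inv_eq_iff[OF sg r] same_coset coset by simp
    ultimately obtain z where z: "z \<in> H #> r" "z \<otimes> z = \<one>"
      using r by (auto simp: square_cosets_have_involutions_def)
    then have "z \<in> sym_coset H x" using same_coset[OF coset(1)] by (simp add: sym_coset_def)
    then have "r \<otimes> r = \<one>"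
      using class_rep(2)[of "sym_coset H x"] z(2) r_def by blast
    then show ?thesis using inv_equality[OF _ r r] by simp
  qed
qed

lemma rep_code_covers:
  assumes N: "H \<lhd> G"
    and crit: "(\<exists>h. H \<subseteq> {\<one>, h}) \<or> square_cosets_have_involutions G H"
    and x: "x \<in> carrier G" "x \<notin> rep_code H"
  shows "\<exists>!c. c \<in> rep_code H \<and> sum_adj G H x c"
proof -
  have sg: "subgroup H G" using N by (rule normal_imp_subgroup)
  define r where "r = class_rep (sym_coset H x)"
  have r: "r \<in> sym_coset H x" "r \<in> carrier G" using class_rep_sym_coset[OF sg x(1)] by (simp_all add: r_def)
  have code_iff: "c \<in> rep_code H \<longleftrightarrow> c = r \<or> c = inv r" if "c \<in> sym_coset H x" for c
    using rep_code_inter_sym_coset[OF N x(1) that] by (simp add: r_def)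
  have "x \<noteq> r" "x \<noteq> inv r" using code_iff[OF sym_coset_self[OF sg x(1)]] x(2) by auto
  then have r_adj: "sum_adj G H x c \<longleftrightarrow> c \<in> H #> inv x" if "c = r \<or> c = inv r" for c
    using that x(1) r(2) by (auto simp: sum_adj_iff[OF N])
  have code_adj: "c \<in> rep_code H \<and> sum_adj G H x c \<longleftrightarrow> (c = r \<or> c = inv r) \<and> c \<in> H #> inv x" for c
  proof
    assume "c \<in> rep_code H \<and> sum_adj G H x c"
    then show "(c = r \<or> c = inv r) \<and> c \<in> H #> inv x"
      using code_iff adjacent_in_sym_coset[OF N] r_adj by blast
  next
    assume c: "(c = r \<or> c = inv r) \<and> c \<in> H #> inv x"
    then have "c \<in> sym_coset H x" by (simp add: sym_coset_def)
    then show "c \<in> rep_code H \<and> sum_adj G H x c" using c code_iff r_adj by blast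
  qed
  have some_adj: "r \<in> H #> inv x \<or> inv r \<in> H #> inv x"
    using r(1) inv_mem_rcos[OF N x(1)] by (auto simp: sym_coset_def)
  have both_adj: "r = inv r" if "r \<in> H #> inv x" "inv r \<in> H #> inv x"
    using class_rep_adjacent_pair[OF N crit _ _ r_def] r_adj that by blast
  have "\<exists>!c. (c = r \<or> c = inv r) \<and> c \<in> H #> inv x"
  proof (cases "r \<in> H #> inv x")
    case True
    then show ?thesis using both_adj by (intro ex1I[of _ r]) auto
  next
    case False
    then show ?thesis using some_adj by (intro ex1I[of _ "inv r"]) auto
  qed
  then show ?thesis by (simp only: code_adj)
qed

lemma perfect_code_rep_code:
  assumes "H \<lhd> G" "(\<exists>h. H \<subseteq> {\<one>, h}) \<or> square_cosets_have_involutions G H"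
  shows "perfect_code G H (rep_code H)"
  unfolding perfect_code_def
  using rep_code_independent[OF assms(1)] rep_code_covers[OF assms] by (auto simp: rep_code_def)

lemma inv_mem_square_coset:
  assumes N: "H \<lhd> G" and g: "g \<in> carrier G" "g \<otimes> g \<in> H" and u: "u \<in> H #> g"
  shows "inv u \<in> H #> g"
  using inv_mem_rcos[OF N g(1) u] rcos_inv_eq_iff[OF normal_imp_subgroup[OF N] g(1)] g(2) by simp

lemma sum_adj_in_square_coset:
  assumes N: "H \<lhd> G" and g: "g \<in> carrier G" "g \<otimes> g \<in> H" and u: "u \<in> H #> g"
  shows "sum_adj G H u v \<longleftrightarrow> v \<in> H #> g \<and> v \<noteq> u \<and> v \<noteq> inv u"
proof -
  have sg: "subgroup H G" using N by (rule normal_imp_subgroup)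
  have "H #> inv u = H #> g"
    using repr_independence[OF inv_mem_square_coset[OF assms] g(1) sg] by simp
  moreover have "u \<in> carrier G" using subgroup.elemrcos_carrier[OF sg is_group g(1) u] .
  ultimately show ?thesis by (simp add: sum_adj_iff[OF N])
qed

lemma perfect_code_meets_square_coset:
  assumes N: "H \<lhd> G" and C: "perfect_code G H C" and g: "g \<in> carrier G" "g \<otimes> g \<in> H"
  obtains c where "c \<in> C" "c \<in> H #> g"
proof (cases "g \<in> C")
  case True
  then show ?thesis using that rcos_self[OF g(1) normal_imp_subgroup[OF N]] by blast
next
  case False
  then have "\<exists>!c. c \<in> C \<and> sum_adj G H g c" using C g(1) by (simp add: perfect_code_def)
  then obtain c where "c \<in> C" "sum_adj G H g c" by blast
  then show ?thesis
    using that sum_adj_in_square_coset[OF N g rcos_self[OF g(1) normal_imp_subgroup[OF N]]] by blast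
qed

lemma perfect_code_square_coset_subset:
  assumes N: "H \<lhd> G" and C: "perfect_code G H C" and g: "g \<in> carrier G" "g \<otimes> g \<in> H"
    and c: "c \<in> C" "c \<in> H #> g" "c \<noteq> inv c"
  shows "H #> g \<subseteq> {c, inv c}"
proof
  fix y assume y: "y \<in> H #> g"
  have sg: "subgroup H G" using N by (rule normal_imp_subgroup)
  have indep: "\<And>x y. x \<in> C \<Longrightarrow> y \<in> C \<Longrightarrow> \<not> sum_adj G H x y"
    and cover: "\<And>x. x \<in> carrier G \<Longrightarrow> x \<notin> C \<Longrightarrow> \<exists>!c. c \<in> C \<and> sum_adj G H x c"
    using C by (auto simp: perfect_code_def)
  note adj = sum_adj_in_square_coset[OF N g]
  have c_carrier: "c \<in> carrier G" and y_carrier: "y \<in> carrier G"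
    using subgroup.elemrcos_carrier[OF sg is_group g(1)] c(2) y by blast+
  have c_inv: "inv c \<in> H #> g" using inv_mem_square_coset[OF N g c(2)] .
  show "y \<in> {c, inv c}"
  proof (rule ccontr)
    assume "y \<notin> {c, inv c}"
    then have "y \<noteq> c" "y \<noteq> inv c" "c \<noteq> inv y" "inv c \<noteq> inv y"
      using c_carrier y_carrier by (auto simp: inv_inv)
    then have "sum_adj G H c y" "sum_adj G H y c" "sum_adj G H y (inv c)"
      using adj c(2) c_inv y by auto
    then have "y \<notin> C" using indep c(1) by blast
    show False
    proof (cases "inv c \<in> C")
      case True
      then show False
        using cover[OF y_carrier \<open>y \<notin> C\<close>] \<open>sum_adj G H y c\<close> \<open>sum_adj G H y (inv c)\<close> c by blast
    next
      case False
      then obtain d where d: "d \<in> C" "sum_adj G H (inv c) d"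
        using cover c_carrier by blast
      then have "sum_adj G H c d" using adj[OF c_inv] adj[OF c(2)] c_carrier by auto
      then show False using indep c(1) d(1) by blast
    qed
  qed
qed

lemma perfect_code_imp_criterion:
  assumes N: "H \<lhd> G" and C: "perfect_code G H C"
  shows "(\<exists>h. H \<subseteq> {\<one>, h}) \<or> square_cosets_have_involutions G H"
proof (rule ccontr)
  assume "\<not> ?thesis"
  then have big: "\<And>h. \<not> H \<subseteq> {\<one>, h}" and "\<not> square_cosets_have_involutions G H" by auto
  then obtain g where g: "g \<in> carrier G" "g \<otimes> g \<in> H" and no_inv: "\<forall>z\<in>H #> g. z \<otimes> z \<noteq> \<one>"
    unfolding square_cosets_have_involutions_def by blast
  obtain h1 where h1: "h1 \<in> H" "h1 \<noteq> \<one>" using big[of \<one>] by blast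
  obtain h2 where h2: "h2 \<in> H" "h2 \<noteq> \<one>" "h2 \<noteq> h1" using big[of h1] by blast
  have sg: "subgroup H G" using N by (rule normal_imp_subgroup)
  obtain c where c: "c \<in> C" "c \<in> H #> g" using perfect_code_meets_square_coset[OF N C g] .
  have c_carrier: "c \<in> carrier G" using subgroup.elemrcos_carrier[OF sg is_group g(1) c(2)] .
  have "c \<noteq> inv c" using no_inv c(2) r_inv[OF c_carrier] by metis
  then have K: "H #> g \<subseteq> {c, inv c}" using perfect_code_square_coset_subset[OF N C g c] by blast
  have "H #> g = H #> c" using repr_independence[OF c(2) g(1) sg] .
  then have "h1 \<otimes> c \<in> H #> g" "h2 \<otimes> c \<in> H #> g"
    using rcosI[OF _ subgroup.subset[OF sg] c_carrier] h1 h2 by simp_all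
  moreover have "h1 \<otimes> c \<noteq> c" "h2 \<otimes> c \<noteq> c"
    using h1 h2 c_carrier subgroup.mem_carrier[OF sg] by (metis l_one r_cancel one_closed)+
  ultimately have "h1 \<otimes> c = inv c" "h2 \<otimes> c = inv c" using K by auto
  then show False
    using h1 h2 c_carrier subgroup.mem_carrier[OF sg] by (metis r_cancel)
qed

theorem perfect_code_iff_criterion:
  assumes "H \<lhd> G"
  shows "(\<exists>C. perfect_code G H C) \<longleftrightarrow> (\<exists>h. H \<subseteq> {\<one>, h}) \<or> square_cosets_have_involutions G H"
  using perfect_code_imp_criterion perfect_code_rep_code assms by blast

lemma square_cosets_have_involutions_carrier: "square_cosets_have_involutions G (carrier G)"
  unfolding square_cosets_have_involutions_def
  using coset_join2[OF _ subgroup_self] by (metis l_one one_closed)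

end

section \<open>The dicyclic group\<close>

lemma Dic_carrier_iff: "x \<in> carrier (Dic n) \<longleftrightarrow> 0 \<le> fst x \<and> fst x < 2 * int n \<and> (snd x = 0 \<or> snd x = 1)"
  by (cases x) (auto simp: Dic_def)

lemma Dic_mult: "(i, j) \<otimes>\<^bsub>Dic n\<^esub> (k, l) =
   ((i + (if j = 0 then k else - k) + (if j = 1 \<and> l = 1 then int n else 0)) mod (2 * int n), (j + l) mod 2)"
  by (simp add: Dic_def Let_def)

lemma Dic_one: "\<one>\<^bsub>Dic n\<^esub> = (0, 0)"
  by (simp add: Dic_def)

lemma finite_carrier_Dic: "finite (carrier (Dic n))"
  by (simp add: Dic_def)

lemma mod_diff_add_left_eq: "(a mod m - b + c) mod m = (a - b + c) mod (m::int)"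
  by (metis mod_add_left_eq mod_diff_left_eq)

lemma mod_diff_add_right_eq: "(a - b mod m + c) mod m = (a - b + c) mod (m::int)"
  by (metis mod_add_left_eq mod_diff_right_eq)

lemma Dic_mult_assoc:
  assumes "j = 0 \<or> j = 1" "l = 0 \<or> l = 1" "q = 0 \<or> q = 1"
  shows "(i, j) \<otimes>\<^bsub>Dic n\<^esub> (k, l) \<otimes>\<^bsub>Dic n\<^esub> (p, q) = (i, j) \<otimes>\<^bsub>Dic n\<^esub> ((k, l) \<otimes>\<^bsub>Dic n\<^esub> (p, q))"
  using assms
  by (elim disjE; simp add: Dic_mult mod_simps mod_diff_add_left_eq mod_diff_add_right_eq;
      simp add: mod_eq_dvd_iff algebra_simps)

lemma group_Dic:
  assumes "0 < n"
  shows "group (Dic n)"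
proof (rule groupI)
  fix x y z assume "x \<in> carrier (Dic n)" "y \<in> carrier (Dic n)" "z \<in> carrier (Dic n)"
  then show "x \<otimes>\<^bsub>Dic n\<^esub> y \<otimes>\<^bsub>Dic n\<^esub> z = x \<otimes>\<^bsub>Dic n\<^esub> (y \<otimes>\<^bsub>Dic n\<^esub> z)"
    by (cases x; cases y; cases z) (simp add: Dic_carrier_iff Dic_mult_assoc)
next
  fix x assume x: "x \<in> carrier (Dic n)"
  obtain i j where ij: "x = (i, j)" by fastforce
  let ?y = "if j = 0 then ((- i) mod (2 * int n), 0) else ((i + int n) mod (2 * int n), 1)"
  have "?y \<otimes>\<^bsub>Dic n\<^esub> x = \<one>\<^bsub>Dic n\<^esub>"
    using x ij by (auto simp: Dic_carrier_iff Dic_mult Dic_one mod_simps mod_diff_add_left_eq)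
  moreover have "?y \<in> carrier (Dic n)"
    using assms by (simp add: Dic_carrier_iff)
  ultimately show "\<exists>y\<in>carrier (Dic n). y \<otimes>\<^bsub>Dic n\<^esub> x = \<one>\<^bsub>Dic n\<^esub>" by blast
qed (use assms in \<open>auto simp: Dic_carrier_iff Dic_mult Dic_one\<close>)

lemma dic_a_nat_pow: "dic_a n [^]\<^bsub>Dic n\<^esub> (k::nat) = (int k mod (2 * int n), 0)"
  by (induction k) (simp_all add: dic_a_def Dic_one Dic_mult mod_simps add.commute)

lemma dic_a_int_pow:
  assumes "0 < n"
  shows "dic_a n [^]\<^bsub>Dic n\<^esub> (i::int) = (i mod (2 * int n), 0)"
proof (cases "0 \<le> i")
  case True
  then show ?thesis by (metis dic_a_nat_pow int_nat_eq pow_nat)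
next
  case False
  interpret group "Dic n" using group_Dic[OF assms] .
  have "(i mod (2 * int n), 0) \<otimes>\<^bsub>Dic n\<^esub> ((- i) mod (2 * int n), 0) = \<one>\<^bsub>Dic n\<^esub>"
    by (simp add: Dic_mult Dic_one mod_simps)
  then have "inv\<^bsub>Dic n\<^esub> ((- i) mod (2 * int n), 0) = (i mod (2 * int n), 0)"
    using assms by (intro inv_equality) (simp_all add: Dic_carrier_iff)
  then show ?thesis
    using False by (simp add: int_pow_def2 dic_a_nat_pow)
qed

lemma Dic_square_eq_one_iff:
  assumes "0 < n" "x \<in> carrier (Dic n)"
  shows "x \<otimes>\<^bsub>Dic n\<^esub> x = \<one>\<^bsub>Dic n\<^esub> \<longleftrightarrow> x = (0, 0) \<or> x = (int n, 0)"
proof -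
  obtain i j where x: "x = (i, j)" "0 \<le> i" "i < 2 * int n" "j = 0 \<or> j = 1"
    using assms(2) by (cases x) (auto simp: Dic_carrier_iff)
  have double: "(i + i) mod (2 * int n) = 0 \<longleftrightarrow> i = 0 \<or> i = int n"
  proof
    assume "(i + i) mod (2 * int n) = 0"
    then obtain q where q: "i = int n * q" by (auto simp: mod_eq_0_iff_dvd simp flip: mult_2)
    then have "0 \<le> q" "q < 2" using x(2,3) assms(1) by (simp_all add: zero_le_mult_iff)
    then show "i = 0 \<or> i = int n" using q by (cases "q = 0") auto
  next
    assume "i = 0 \<or> i = int n"
    then show "(i + i) mod (2 * int n) = 0" by (elim disjE) simp_all
  qed
  from x(4) show ?thesis
  proof
    assume "j = 0"
    then show ?thesis using x(1) double by (simp add: Dic_mult Dic_one)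
  next
    assume "j = 1"
    then show ?thesis using x(1) assms(1) by (simp add: Dic_mult Dic_one)
  qed
qed

lemma int_diff_closed_eq_multiples:
  fixes S :: "int set"
  assumes diff: "\<And>a b. a \<in> S \<Longrightarrow> b \<in> S \<Longrightarrow> a - b \<in> S" and m: "m \<in> S" "0 < m"
  shows "\<exists>t::nat. 0 < t \<and> S = {k. int t dvd k}"
proof -
  define t where "t = (LEAST t::nat. 0 < t \<and> int t \<in> S)"
  have "0 < nat m \<and> int (nat m) \<in> S" using m by simp
  then have t: "0 < t" "int t \<in> S" unfolding t_def by (metis (mono_tags, lifting) LeastI)+
  have t_min: "t \<le> s" if "0 < s" "int s \<in> S" for s
    unfolding t_def using that by (simp add: Least_le)
  have zero: "0 \<in> S" using diff[OF m(1) m(1)] by simp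
  have multiples: "int t * q \<in> S" for q
  proof (induction q rule: int_induct[where k = 0])
    case base then show ?case using zero by simp
  next
    case (step1 q)
    have "int t * q - (0 - int t) \<in> S" using diff step1 diff[OF zero t(2)] by blast
    then show ?case by (simp add: algebra_simps)
  next
    case (step2 q)
    have "int t * q - int t \<in> S" using diff step2 t(2) by blast
    then show ?case by (simp add: algebra_simps)
  qed
  have dvd: "int t dvd k" if "k \<in> S" for k
  proof -
    have "k - int t * (k div int t) \<in> S" using diff[OF that multiples] .
    then have "int (nat (k mod int t)) \<in> S" using t(1) by (simp add: minus_mult_div_eq_mod)
    moreover have "nat (k mod int t) < t" using t(1) by (simp add: nat_less_iff)
    ultimately have "\<not> 0 < nat (k mod int t)" using t_min leD by blast
    then have "k mod int t = 0" using t(1) pos_mod_sign[of "int t" k] by linarith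
    then show ?thesis by (simp add: mod_eq_0_iff_dvd)
  qed
  have "S = {k. int t dvd k}"
  proof (intro Set.set_eqI iffI)
    show "k \<in> {k. int t dvd k}" if "k \<in> S" for k using dvd[OF that] by simp
    show "k \<in> S" if "k \<in> {k. int t dvd k}" for k using that multiples by (auto elim: dvdE)
  qed
  then show ?thesis using t(1) by blast
qed

definition dic_rot :: "nat \<Rightarrow> nat \<Rightarrow> (int \<times> int) set" where
  "dic_rot n t = {(j, 0) | j. 0 \<le> j \<and> j < 2 * int n \<and> int t dvd j}"

lemma generate_dic_a_pow:
  assumes "0 < n" "0 < t" "t dvd 2 * n"
  shows "generate (Dic n) {dic_a n [^]\<^bsub>Dic n\<^esub> t} = dic_rot n t"
proof -
  interpret group "Dic n" using group_Dic[OF assms(1)] .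
  have a: "dic_a n \<in> carrier (Dic n)" using assms(1) by (simp add: dic_a_def Dic_carrier_iff)
  have tdvd: "int t dvd 2 * int n" using assms(3) by (metis of_nat_dvd_iff of_nat_mult of_nat_numeral)
  have "generate (Dic n) {dic_a n [^]\<^bsub>Dic n\<^esub> t} = range (\<lambda>k. dic_a n [^]\<^bsub>Dic n\<^esub> (t * k))"
    using generate_pow_on_finite_carrier[OF finite_carrier_Dic nat_pow_closed[OF a]] a
    by (auto simp: nat_pow_pow)
  also have "\<dots> = dic_rot n t"
  proof (intro Set.set_eqI iffI)
    fix x assume "x \<in> range (\<lambda>k. dic_a n [^]\<^bsub>Dic n\<^esub> (t * k))"
    then obtain k where "x = (int (t * k) mod (2 * int n), 0)" by (auto simp: dic_a_nat_pow)
    then show "x \<in> dic_rot n t" using tdvd assms(1) by (auto simp: dic_rot_def dvd_mod)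
  next
    fix x assume "x \<in> dic_rot n t"
    then obtain q where q: "x = (int t * q, 0)" "0 \<le> int t * q" "int t * q < 2 * int n"
      by (auto simp: dic_rot_def elim!: dvdE)
    then have "x = dic_a n [^]\<^bsub>Dic n\<^esub> (t * nat q)"
      using assms(2) by (simp add: dic_a_nat_pow zero_le_mult_iff)
    then show "x \<in> range (\<lambda>k. dic_a n [^]\<^bsub>Dic n\<^esub> (t * k))" by blast
  qed
  finally show ?thesis .
qed

lemma Dic_rotation_subgroup_eq_dic_rot:
  assumes "0 < n" "subgroup H (Dic n)" "\<forall>x\<in>H. snd x = 0"
  shows "\<exists>t. 0 < t \<and> t dvd 2 * n \<and> H = dic_rot n t"
proof -
  interpret group "Dic n" using group_Dic[OF assms(1)] .
  have a: "dic_a n \<in> carrier (Dic n)" using assms(1) by (simp add: dic_a_def Dic_carrier_iff)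
  define S where "S = {i. dic_a n [^]\<^bsub>Dic n\<^esub> (i::int) \<in> H}"
  have "i - j \<in> S" if "i \<in> S" "j \<in> S" for i j
    using that assms(2) by (simp add: S_def int_pow_diff[OF a] subgroup.m_closed subgroup.m_inv_closed)
  moreover have "2 * int n \<in> S"
    using subgroup.one_closed[OF assms(2)] by (simp add: S_def dic_a_int_pow[OF assms(1)] Dic_one)
  ultimately obtain t where t: "0 < t" "S = {k. int t dvd k}"
    using int_diff_closed_eq_multiples assms(1) by (metis of_nat_0_less_iff zero_less_mult_iff zero_less_numeral)
  have "int t dvd 2 * int n" using \<open>2 * int n \<in> S\<close> t(2) by simp
  then have "t dvd 2 * n" by (metis of_nat_dvd_iff of_nat_mult of_nat_numeral)
  moreover have "H = dic_rot n t"
  proof (intro Set.set_eqI iffI)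
    fix x assume x: "x \<in> H"
    then obtain i where i: "x = (i, 0)" "0 \<le> i" "i < 2 * int n"
      using assms(3) subgroup.mem_carrier[OF assms(2)] by (cases x) (fastforce simp: Dic_carrier_iff)
    then have "i \<in> S" using x by (simp add: S_def dic_a_int_pow[OF assms(1)])
    then show "x \<in> dic_rot n t" using i t(2) by (simp add: dic_rot_def)
  next
    fix x assume "x \<in> dic_rot n t"
    then obtain j where j: "x = (j, 0)" "0 \<le> j" "j < 2 * int n" "int t dvd j"
      by (auto simp: dic_rot_def)
    then have "j \<in> S" using t(2) by simp
    then show "x \<in> H" using j by (simp add: S_def dic_a_int_pow[OF assms(1)])
  qed
  ultimately show ?thesis using t(1) by blast
qed

lemma Dic_reflection_conj:
  assumes "0 < n" "x \<in> carrier (Dic n)" "snd x = 1"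
  shows "x \<otimes>\<^bsub>Dic n\<^esub> inv\<^bsub>Dic n\<^esub> dic_a n = dic_a n \<otimes>\<^bsub>Dic n\<^esub> x"
proof -
  interpret group "Dic n" using group_Dic[OF assms(1)] .
  have "inv\<^bsub>Dic n\<^esub> dic_a n = ((- 1) mod (2 * int n), 0)"
    using dic_a_int_pow[OF assms(1), of "- 1"] assms(1)
    by (simp add: int_pow_neg dic_a_def Dic_carrier_iff)
  then show ?thesis
    using assms(3) by (cases x) (simp add: Dic_mult dic_a_def mod_simps add.commute)
qed

lemma Dic_normal_reflection_imp_a_square:
  assumes "0 < n" "H \<lhd> Dic n" "x \<in> H" "snd x = 1"
  shows "dic_a n \<otimes>\<^bsub>Dic n\<^esub> dic_a n \<in> H"
proof -
  interpret group "Dic n" using group_Dic[OF assms(1)] .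
  have sg: "subgroup H (Dic n)" using assms(2) by (rule normal_imp_subgroup)
  have a: "dic_a n \<in> carrier (Dic n)" using assms(1) by (simp add: dic_a_def Dic_carrier_iff)
  have x: "x \<in> carrier (Dic n)" using subgroup.mem_carrier[OF sg assms(3)] .
  have "dic_a n \<otimes>\<^bsub>Dic n\<^esub> x \<otimes>\<^bsub>Dic n\<^esub> inv\<^bsub>Dic n\<^esub> dic_a n \<otimes>\<^bsub>Dic n\<^esub> inv\<^bsub>Dic n\<^esub> x \<in> H"
    using normal.inv_op_closed2[OF assms(2) a assms(3)] subgroup.m_inv_closed[OF sg assms(3)]
      subgroup.m_closed[OF sg] by blast
  then show ?thesis
    using Dic_reflection_conj[OF assms(1) x assms(4)] a x by (simp add: m_assoc)
qed

lemma Dic_generated_by_a_and_reflection: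
  assumes "0 < n" "subgroup H (Dic n)" "dic_a n \<in> H" "x \<in> H" "snd x = 1"
  shows "H = carrier (Dic n)"
proof
  interpret group "Dic n" using group_Dic[OF assms(1)] .
  show "H \<subseteq> carrier (Dic n)" using assms(2) by (rule subgroup.subset)
  have pow: "dic_a n [^]\<^bsub>Dic n\<^esub> (i::int) \<in> H" for i
    using subgroup_int_pow_closed[OF assms(2,3)] .
  obtain i where x: "x = (i, 1)" "0 \<le> i" "i < 2 * int n"
    using assms(5) subgroup.mem_carrier[OF assms(2,4)] by (cases x) (auto simp: Dic_carrier_iff)
  show "carrier (Dic n) \<subseteq> H"
  proof
    fix y assume y: "y \<in> carrier (Dic n)"
    then consider "y = (fst y, 0)" | "y = (fst y, 1)" by (cases y) (auto simp: Dic_carrier_iff)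
    then show "y \<in> H"
    proof cases
      case 1
      then show ?thesis using pow[of "fst y"] y by (simp add: dic_a_int_pow[OF assms(1)] Dic_carrier_iff)
    next
      case 2
      have "dic_a n [^]\<^bsub>Dic n\<^esub> (fst y - i) \<otimes>\<^bsub>Dic n\<^esub> x = y"
        using x y by (subst 2) (simp add: dic_a_int_pow[OF assms(1)] Dic_mult mod_simps Dic_carrier_iff)
      then show ?thesis using subgroup.m_closed[OF assms(2) pow[of "fst y - i"] assms(4)] by simp
    qed
  qed
qed

lemma Dic_criterion_fails_with_reflection:
  assumes "0 < n" "H \<lhd> Dic n" "x \<in> H" "snd x = 1" "H \<noteq> carrier (Dic n)"
  shows "\<not> (\<exists>h. H \<subseteq> {\<one>\<^bsub>Dic n\<^esub>, h})" "\<not> square_cosets_have_involutions (Dic n) H"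
proof -
  interpret group "Dic n" using group_Dic[OF assms(1)] .
  have sg: "subgroup H (Dic n)" using assms(2) by (rule normal_imp_subgroup)
  have nH: "(int n, 0) \<in> H"
    using assms(4) subgroup.m_closed[OF sg assms(3) assms(3)] by (cases x) (simp add: Dic_mult)
  show "\<not> (\<exists>h. H \<subseteq> {\<one>\<^bsub>Dic n\<^esub>, h})"
  proof
    assume "\<exists>h. H \<subseteq> {\<one>\<^bsub>Dic n\<^esub>, h}"
    then obtain h where "H \<subseteq> {(0, 0), h}" by (auto simp: Dic_one)
    then have "x = h" "(int n, 0) = h" using assms(1,3,4) nH by auto
    then show False using assms(4) by auto
  qed
  show "\<not> square_cosets_have_involutions (Dic n) H"
  proof
    assume "square_cosets_have_involutions (Dic n) H"
    moreover have a: "dic_a n \<in> carrier (Dic n)" using assms(1) by (simp add: dic_a_def Dic_carrier_iff)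
    ultimately obtain z where z: "z \<in> H #>\<^bsub>Dic n\<^esub> dic_a n" "z \<otimes>\<^bsub>Dic n\<^esub> z = \<one>\<^bsub>Dic n\<^esub>"
      using Dic_normal_reflection_imp_a_square[OF assms(1-4)]
      unfolding square_cosets_have_involutions_def by blast
    have "z \<in> carrier (Dic n)" using subgroup.elemrcos_carrier[OF sg is_group a z(1)] .
    then have "z \<in> H"
      using Dic_square_eq_one_iff[OF assms(1)] z(2) nH subgroup.one_closed[OF sg] by (auto simp: Dic_one)
    then have "H #>\<^bsub>Dic n\<^esub> dic_a n = H"
      using repr_independence[OF z(1) a sg] subgroup.rcos_const[OF sg is_group] by simp
    then have "dic_a n \<in> H" using coset_join1[OF _ a sg] by simp
    then show False
      using Dic_generated_by_a_and_reflection[OF assms(1) sg _ assms(3,4)] assms(5) by blast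
  qed
qed

lemma dvd_double_imp_dvd_or_dvd_diff:
  fixes t m n i :: int
  assumes "t * m = 2 * n" "odd m" "t dvd 2 * i"
  shows "t dvd i \<or> t dvd n - i"
proof -
  have "even t" using assms(1,2) by (metis dvd_triv_left even_mult_iff)
  then obtain s where s: "t = 2 * s" by blast
  then obtain q where q: "i = s * q" using assms(3) by (auto elim: dvdE)
  have n: "n = s * m" using assms(1) s by simp
  show ?thesis
  proof (cases "even q")
    case True
    then show ?thesis using q s by (auto elim!: evenE)
  next
    case False
    then have "even (m - q)" using assms(2) by simp
    then obtain r where "m - q = 2 * r" by (elim evenE)
    then have "n - i = t * r" using n q s by (simp add: algebra_simps flip: right_diff_distrib)
    then show ?thesis by simp
  qed
qed

lemma dic_rot_subset_carrier: "dic_rot n t \<subseteq> carrier (Dic n)"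
  by (auto simp: dic_rot_def Dic_carrier_iff)

lemma dic_rot_self:
  assumes "0 < n"
  shows "dic_rot n n = {(0, 0), (int n, 0)}"
proof -
  have "j = 0 \<or> j = int n" if j: "0 \<le> j" "j < 2 * int n" "int n dvd j" for j
  proof -
    obtain q where q: "j = int n * q" using j(3) by blast
    then have "0 \<le> q" "q < 2" using j(1,2) assms by (simp_all add: zero_le_mult_iff)
    then show ?thesis using q by (cases "q = 0") auto
  qed
  then show ?thesis using assms by (auto simp: dic_rot_def)
qed

lemma square_cosets_have_involutions_dic_rot:
  assumes "0 < n" "t * m = 2 * n" "odd m"
  shows "square_cosets_have_involutions (Dic n) (dic_rot n t)"
  unfolding square_cosets_have_involutions_def
proof (intro ballI impI)
  interpret group "Dic n" using group_Dic[OF assms(1)] .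
  let ?M = "2 * int n"
  have mt: "int t * int m = ?M" using assms(2) by (metis of_nat_mult of_nat_numeral)
  then have tdvd: "int t dvd ?M" by (metis dvd_triv_left)
  fix g assume g: "g \<in> carrier (Dic n)" "g \<otimes>\<^bsub>Dic n\<^esub> g \<in> dic_rot n t"
  obtain i j where ij: "g = (i, j)" "0 \<le> i" "i < ?M" "j = 0 \<or> j = 1"
    using g(1) by (cases g) (auto simp: Dic_carrier_iff)
  have "j = 0"
  proof (rule ccontr)
    assume "j \<noteq> 0"
    then have "int t dvd int n" using g(2) ij by (auto simp: Dic_mult dic_rot_def)
    then obtain q where "n = t * q" by (metis of_nat_dvd_iff dvdE)
    then have "m = 2 * q" using assms(2) assms(1) by auto
    then show False using assms(3) by simp
  qed
  then have "g \<otimes>\<^bsub>Dic n\<^esub> g = ((i + i) mod ?M, 0)" using ij(1) by (simp add: Dic_mult)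
  then have "int t dvd (i + i) mod ?M" using g(2) by (simp add: dic_rot_def)
  then have "int t dvd i + i" using dvd_mod_iff[OF tdvd] by blast
  then have "int t dvd 2 * i" by (simp only: mult_2)
  then have split: "int t dvd i \<or> int t dvd int n - i"
    using dvd_double_imp_dvd_or_dvd_diff[OF mt] assms(3) by simp
  define c where "c = (if int t dvd i then 0 else int n)"
  have c: "0 \<le> c" "c < ?M" "int t dvd c - i" using split assms(1) by (auto simp: c_def)
  have "((c - i) mod ?M, 0) \<in> dic_rot n t"
    using c(3) tdvd assms(1) by (simp add: dic_rot_def dvd_mod)
  moreover have "((c - i) mod ?M, 0) \<otimes>\<^bsub>Dic n\<^esub> g = (c, 0)"
    using ij(1) \<open>j = 0\<close> c(1,2) by (simp add: Dic_mult mod_simps)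
  ultimately have "(c, 0) \<in> dic_rot n t #>\<^bsub>Dic n\<^esub> g"
    using rcosI[OF _ dic_rot_subset_carrier g(1)] by metis
  moreover have "(c, 0) \<otimes>\<^bsub>Dic n\<^esub> (c, 0) = \<one>\<^bsub>Dic n\<^esub>"
    using Dic_square_eq_one_iff[OF assms(1)] c(1,2) by (auto simp: c_def Dic_carrier_iff)
  ultimately show "\<exists>z\<in>dic_rot n t #>\<^bsub>Dic n\<^esub> g. z \<otimes>\<^bsub>Dic n\<^esub> z = \<one>\<^bsub>Dic n\<^esub>" by blast
qed

lemma dic_rot_criterion_fails_even:
  assumes "0 < n" "t * m = 2 * n" "even m" "m \<noteq> 2"
  shows "\<not> (\<exists>h. dic_rot n t \<subseteq> {\<one>\<^bsub>Dic n\<^esub>, h})" "\<not> square_cosets_have_involutions (Dic n) (dic_rot n t)"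
proof -
  obtain q where q: "m = 2 * q" using assms(3) by (elim evenE)
  then have n: "n = t * q" using assms(2) by simp
  have "m \<noteq> 0" using assms(1,2) by (metis mult_0_right mult_is_0 not_gr0 zero_neq_numeral)
  then have "2 \<le> q" using q assms(4) by simp
  then have "2 * t < 2 * n" using n assms(1) by (simp add: mult_le_mono2 order_less_le_trans)
  then have "(int t, 0) \<in> dic_rot n t" "(int (2 * t), 0) \<in> dic_rot n t" "0 < t"
    using n assms(1) by (auto simp: dic_rot_def)
  then show "\<not> (\<exists>h. dic_rot n t \<subseteq> {\<one>\<^bsub>Dic n\<^esub>, h})"
  proof (clarsimp simp: Dic_one)
    fix h assume "dic_rot n t \<subseteq> {(0, 0), h}" "(int t, 0) \<in> dic_rot n t" "(2 * int t, 0) \<in> dic_rot n t" "0 < t"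
    then have "(int t, 0) = h" "(2 * int t, (0::int)) = h" by auto
    then have "int t = 2 * int t" by (metis prod.inject)
    then show False using \<open>0 < t\<close> by simp
  qed
  have b: "(0, 1) \<in> carrier (Dic n)" "(0, 1) \<otimes>\<^bsub>Dic n\<^esub> (0, 1) \<in> dic_rot n t"
    using assms(1) n by (auto simp: Dic_carrier_iff Dic_mult dic_rot_def)
  have "z \<otimes>\<^bsub>Dic n\<^esub> z \<noteq> \<one>\<^bsub>Dic n\<^esub>" if z: "z \<in> dic_rot n t #>\<^bsub>Dic n\<^esub> (0, 1)" for z
  proof -
    obtain h where "h \<in> dic_rot n t" "z = h \<otimes>\<^bsub>Dic n\<^esub> (0, 1)"
      using z by (auto simp: r_coset_def)
    then have "snd z = 1" by (auto simp: dic_rot_def Dic_mult)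
    moreover have "z \<in> carrier (Dic n)"
      using \<open>h \<in> dic_rot n t\<close> \<open>z = _\<close> b(1) dic_rot_subset_carrier assms(1)
      by (auto simp: Dic_carrier_iff dic_rot_def Dic_mult)
    ultimately show ?thesis using Dic_square_eq_one_iff[OF assms(1)] by auto
  qed
  then show "\<not> square_cosets_have_involutions (Dic n) (dic_rot n t)"
    using b unfolding square_cosets_have_involutions_def by blast
qed

lemma dic_rot_criterion_iff:
  assumes "0 < n" "t dvd 2 * n"
  shows "(\<exists>h. dic_rot n t \<subseteq> {\<one>\<^bsub>Dic n\<^esub>, h}) \<or> square_cosets_have_involutions (Dic n) (dic_rot n t)
         \<longleftrightarrow> odd (2 * n div t) \<or> 2 * n div t = 2"
proof -
  define m where "m = 2 * n div t"
  have tm: "t * m = 2 * n" using assms(2) by (simp add: m_def)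
  consider "m = 2" | "odd m" | "even m" "m \<noteq> 2" by blast
  then show ?thesis
  proof cases
    case 1
    then have "dic_rot n t \<subseteq> {\<one>\<^bsub>Dic n\<^esub>, (int n, 0)}"
      using tm dic_rot_self[OF assms(1)] by (simp add: Dic_one)
    then show ?thesis using 1 by (auto simp: m_def)
  next
    case 2
    then show ?thesis using square_cosets_have_involutions_dic_rot[OF assms(1) tm] by (simp add: m_def)
  next
    case 3
    then show ?thesis using dic_rot_criterion_fails_even[OF assms(1) tm] by (simp add: m_def)
  qed
qed

lemma Dic_criterion_iff:
  assumes n: "0 < n" and N: "H \<lhd> Dic n"
  shows "(\<exists>h. H \<subseteq> {\<one>\<^bsub>Dic n\<^esub>, h}) \<or> square_cosets_have_involutions (Dic n) H \<longleftrightarrow>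
           H = carrier (Dic n) \<or>
           (\<exists>t::nat. t > 0 \<and> t dvd 2 * n \<and> H = generate (Dic n) {dic_a n [^]\<^bsub>Dic n\<^esub> t} \<and>
              (odd (2 * n div t) \<or> 2 * n div t = 2))"
proof
  have sg: "subgroup H (Dic n)" using N by (rule normal_imp_subgroup)
  assume crit: "(\<exists>h. H \<subseteq> {\<one>\<^bsub>Dic n\<^esub>, h}) \<or> square_cosets_have_involutions (Dic n) H"
  show "H = carrier (Dic n) \<or>
          (\<exists>t::nat. t > 0 \<and> t dvd 2 * n \<and> H = generate (Dic n) {dic_a n [^]\<^bsub>Dic n\<^esub> t} \<and>
             (odd (2 * n div t) \<or> 2 * n div t = 2))"
  proof (cases "H = carrier (Dic n)")
    case False
    then have "\<forall>x\<in>H. snd x = 0"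
      using crit Dic_criterion_fails_with_reflection[OF n N] subgroup.mem_carrier[OF sg]
      by (fastforce simp: Dic_carrier_iff)
    then obtain t where "0 < t" "t dvd 2 * n" "H = dic_rot n t"
      using Dic_rotation_subgroup_eq_dic_rot[OF n sg] by blast
    then show ?thesis using crit dic_rot_criterion_iff[OF n] generate_dic_a_pow[OF n] by metis
  qed simp
next
  assume "H = carrier (Dic n) \<or>
            (\<exists>t::nat. t > 0 \<and> t dvd 2 * n \<and> H = generate (Dic n) {dic_a n [^]\<^bsub>Dic n\<^esub> t} \<and>
               (odd (2 * n div t) \<or> 2 * n div t = 2))"
  then show "(\<exists>h. H \<subseteq> {\<one>\<^bsub>Dic n\<^esub>, h}) \<or> square_cosets_have_involutions (Dic n) H"
  proof
    assume "H = carrier (Dic n)"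
    then show ?thesis using group.square_cosets_have_involutions_carrier[OF group_Dic[OF n]] by simp
  next
    assume "\<exists>t::nat. t > 0 \<and> t dvd 2 * n \<and> H = generate (Dic n) {dic_a n [^]\<^bsub>Dic n\<^esub> t} \<and>
              (odd (2 * n div t) \<or> 2 * n div t = 2)"
    then obtain t where t: "0 < t" "t dvd 2 * n" "H = generate (Dic n) {dic_a n [^]\<^bsub>Dic n\<^esub> t}"
      "odd (2 * n div t) \<or> 2 * n div t = 2" by blast
    then have "H = dic_rot n t" using generate_dic_a_pow[OF n] by simp
    then show ?thesis using dic_rot_criterion_iff[OF n t(2)] t(4) by simp
  qed
qed

theorem theorem3p15:
  fixes n :: nat and H :: "(int \<times> int) set"
  assumes "n \<ge> 2" and "H \<lhd> Dic n"
  shows "(\<exists>C. perfect_code (Dic n) H C) \<longleftrightarrow>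
           (H = carrier (Dic n) \<or>
            (\<exists>t::nat. t > 0 \<and> t dvd 2 * n \<and>
               H = generate (Dic n) {dic_a n [^]\<^bsub>Dic n\<^esub> t} \<and>
               (odd (2 * n div t) \<or> 2 * n div t = 2)))"
proof -
  have n: "0 < n" using assms(1) by simp
  show ?thesis
    using group.perfect_code_iff_criterion[OF group_Dic[OF n] assms(2)] Dic_criterion_iff[OF n assms(2)]
    by simp
qed

end
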